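(* Let $v,w\colon\mathbb{R}^2\to\mathbb{R}$ and $u\colon\mathbb{R}\to\mathbb{R}$ be $C^\infty$ functions satisfying: (1) there exists $\delta>0$ such that $v$, $w$ and all their first partial derivatives are bounded on the set $\{(x,y)\colon x\in\mathbb{R},\ y\in(1-\delta,1+\delta)\cup(-1-\delta,-1+\delta)\}$; (2) there exists $a>0$ such that $w(x,1)>a$ and $w(x,-1)<-a$ for all $x\in\mathbb{R}$; (3) $u$ is $T$-periodic for some $T>0$ and $\frac1T\int_0^T u(t)\,dt=0$. For $\lambda\in\mathbb{R}$ consider the system $$\dot x=v(x,y),\qquad \dot y=w(x,y)+u(\lambda t).$$ Suppose that for every $\lambda$ all solutions of this system starting in the region $\{|y|\leqslant 1\}$ can be continued to all $t\geqslant 0$. Then there exists $\lambda_0>0$ such that for every $\lambda\geqslant\lambda_0$ the system has a solution $(x(t),y(t))$ with $|y(t)|<1$ for all $t\geqslant 0$.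
   Context: All functions are $C^\infty$ smooth. *)

theory Defs
  imports "HOL-Analysis.Analysis"
begin

fun Ck :: "nat \<Rightarrow> ('a::real_normed_vector \<Rightarrow> 'b::real_normed_vector) \<Rightarrow> bool" where
  "Ck 0 f = continuous_on UNIV f"
| "Ck (Suc k) f = (\<exists>f'. (\<forall>z. (f has_derivative f' z) (at z)) \<and> (\<forall>h. Ck k (\<lambda>z. f' z h)))"

definition C_inf :: "('a::real_normed_vector \<Rightarrow> 'b::real_normed_vector) \<Rightarrow> bool" where
  "C_inf f \<longleftrightarrow> (\<forall>k. Ck k f)"

definition is_solution ::
  "(real \<times> real \<Rightarrow> real) \<Rightarrow> (real \<times> real \<Rightarrow> real) \<Rightarrow> (real \<Rightarrow> real) \<Rightarrow> real
   \<Rightarrow> (real \<Rightarrow> real) \<Rightarrow> (real \<Rightarrow> real) \<Rightarrow> bool" where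
  "is_solution v w u lam X Y \<longleftrightarrow>
     (\<forall>t\<ge>0. (X has_real_derivative v (X t, Y t)) (at t within {0..}) \<and>
             (Y has_real_derivative w (X t, Y t) + u (lam * t)) (at t within {0..}))"

end

theory Submission
  imports Defs
begin

text \<open>Let U be the primitive of u; it is bounded because u is periodic with mean zero.
  Along a solution the averaged coordinate G = y - U(\<lambda> t) / \<lambda> satisfies G' = w(x, y)
  and differs from y by at most M / \<lambda>. For large \<lambda> the lines G = c and G = -c, with
  c = 1 - M / \<lambda>, therefore lie in the strips near y = 1 and y = -1 where w is positive,
  respectively negative, so a trajectory can cross them only outwards. Among the solutions
  started at (0, y(0)) with y(0) \<in> [-c, c], those leaving the band |G| < c first through
  the top and those leaving it first through the bottom form disjoint relatively open sets
  (by continuous dependence on the initial value) containing c and -c respectively.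
  By connectedness of [-c, c] some y(0) lies in neither set, and its solution keeps |y| < 1.\<close>

lemma C_inf_imp_C1:
  assumes "C_inf f"
  shows "\<exists>f'. (\<forall>z. (f has_derivative f' z) (at z)) \<and> (\<forall>h. continuous_on UNIV (\<lambda>z. f' z h))"
  using assms unfolding C_inf_def by (metis Ck.simps(1) Ck.simps(2) One_nat_def)

lemma C_inf_imp_continuous: "C_inf f \<Longrightarrow> continuous_on UNIV f"
  unfolding C_inf_def by (metis Ck.simps(1))

lemma C1_lipschitz_on_compact_convex:
  fixes f :: "'a::euclidean_space \<Rightarrow> 'b::real_normed_vector"
  assumes f': "\<And>z. (f has_derivative f' z) (at z)"
    and cont: "\<And>h. continuous_on UNIV (\<lambda>z. f' z h)"
    and K: "compact K" "convex K"
  obtains L where "L-lipschitz_on K f"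
proof -
  have "\<exists>M. \<forall>z\<in>K. norm (f' z b) \<le> M" for b
    using compact_imp_bounded[OF compact_continuous_image[OF continuous_on_subset[OF cont[of b]] K(1)]]
    unfolding bounded_iff by auto
  then obtain M where M: "\<And>b z. z \<in> K \<Longrightarrow> norm (f' z b) \<le> M b"
    by metis
  have onorm_bound: "onorm (f' z) \<le> (\<Sum>b\<in>Basis. M b)" if "z \<in> K" for z
    using onorm_componentwise[OF has_derivative_bounded_linear[OF f'[of z]]]
      sum_mono[of Basis "\<lambda>b. norm (f' z b)" M, OF M[OF that]] by linarith
  have bound: "norm (f x - f y) \<le> (\<Sum>b\<in>Basis. M b) * norm (x - y)"
    if "x \<in> K" "y \<in> K" for x y
    using differentiable_bound[OF K(2) has_derivative_at_withinI[OF f'] onorm_bound that] .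
  have "(max 0 (\<Sum>b\<in>Basis. M b))-lipschitz_on K f"
  proof (rule lipschitz_onI)
    fix x y assume "x \<in> K" "y \<in> K"
    then have "norm (f x - f y) \<le> (\<Sum>b\<in>Basis. M b) * norm (x - y)" by (rule bound)
    also have "\<dots> \<le> max 0 (\<Sum>b\<in>Basis. M b) * norm (x - y)"
      by (intro mult_right_mono) auto
    finally show "dist (f x) (f y) \<le> max 0 (\<Sum>b\<in>Basis. M b) * dist x y"
      by (simp add: dist_norm)
  qed simp
  then show ?thesis by (rule that)
qed

lemma has_real_derivative_partial2:
  fixes f :: "'a::real_normed_vector \<times> real \<Rightarrow> real"
  assumes "(f has_derivative f') (at (x, s))"
  shows "((\<lambda>s. f (x, s)) has_real_derivative f' (0, 1)) (at s)"
proof -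
  have "((\<lambda>s. f (x, s)) has_derivative f' \<circ> (\<lambda>h. (0, h))) (at s)"
    using diff_chain_at[OF has_derivative_Pair[OF has_derivative_const has_derivative_ident] assms]
    by (simp only: comp_def)
  moreover have "f' \<circ> (\<lambda>h. (0, h)) = (*) (f' (0, 1))"
  proof
    fix h :: real
    have "f' (0, h) = f' (h *\<^sub>R (0, 1))" by simp
    also have "\<dots> = h *\<^sub>R f' (0, 1)"
      by (rule linear_scale[OF has_derivative_linear[OF assms]])
    finally show "(f' \<circ> (\<lambda>h. (0, h))) h = f' (0, 1) * h" by simp
  qed
  ultimately show ?thesis
    unfolding has_field_derivative_def by simp
qed

lemma norm_diff_le_exp_lipschitz:
  fixes p q :: "real \<Rightarrow> 'a::real_inner"
  assumes "0 \<le> L" "0 \<le> t"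
    and cont: "continuous_on {0..t} p" "continuous_on {0..t} q"
    and p': "\<And>s. s \<in> {0<..<t} \<Longrightarrow> (p has_vector_derivative p' s) (at s)"
    and q': "\<And>s. s \<in> {0<..<t} \<Longrightarrow> (q has_vector_derivative q' s) (at s)"
    and lip: "\<And>s. s \<in> {0<..<t} \<Longrightarrow> norm (p' s - q' s) \<le> L * norm (p s - q s)"
  shows "norm (p t - q t) \<le> exp (L * t) * norm (p 0 - q 0)"
proof -
  define h where "h s = exp (- (2 * L * s)) * ((p s - q s) \<bullet> (p s - q s))" for s
  have "h t \<le> h 0"
  proof (rule DERIV_nonpos_imp_decreasing_open[OF \<open>0 \<le> t\<close>])
    fix s assume "0 < s" "s < t"
    then have s: "s \<in> {0<..<t}" by simp
    have d: "((\<lambda>s. p s - q s) has_vector_derivative p' s - q' s) (at s)"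
      using p'[OF s] q'[OF s] by (rule has_vector_derivative_diff)
    have di: "((\<lambda>s. (p s - q s) \<bullet> (p s - q s)) has_real_derivative
        2 * ((p s - q s) \<bullet> (p' s - q' s))) (at s)"
      using bounded_bilinear.has_vector_derivative[OF bounded_bilinear_inner d d]
      by (simp add: has_real_derivative_iff_has_vector_derivative inner_commute)
    have de: "((\<lambda>s. exp (- (2 * L * s))) has_real_derivative exp (- (2 * L * s)) * (- (2 * L))) (at s)"
      by (auto intro!: derivative_eq_intros)
    have dh: "(h has_real_derivative exp (- (2 * L * s)) *
        (2 * ((p s - q s) \<bullet> (p' s - q' s)) - 2 * L * ((p s - q s) \<bullet> (p s - q s)))) (at s)"
      unfolding h_def[abs_def] using DERIV_mult[OF de di] by (simp add: algebra_simps)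
    have "(p s - q s) \<bullet> (p' s - q' s) \<le> norm (p s - q s) * (L * norm (p s - q s))"
      using norm_cauchy_schwarz[of "p s - q s" "p' s - q' s"] lip[OF s]
      by (meson mult_left_mono norm_ge_zero order_trans)
    then have "(p s - q s) \<bullet> (p' s - q' s) \<le> L * ((p s - q s) \<bullet> (p s - q s))"
      by (simp add: power2_norm_eq_inner[symmetric] power2_eq_square algebra_simps)
    then show "\<exists>y. (h has_real_derivative y) (at s) \<and> y \<le> 0"
      using dh by (intro exI[of _ "_ * _"] conjI) (auto simp: mult_nonneg_nonpos)
  next
    show "continuous_on {0..t} h"
      unfolding h_def by (intro continuous_intros cont)
  qed
  then have "(norm (p t - q t))\<^sup>2 \<le> exp (2 * L * t) * (norm (p 0 - q 0))\<^sup>2"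
    by (simp add: h_def power2_norm_eq_inner exp_minus field_simps)
  also have "\<dots> = (exp (L * t) * norm (p 0 - q 0))\<^sup>2"
    by (simp add: power_mult_distrib exp_double[symmetric] mult.assoc)
  finally show ?thesis
    by (rule power2_le_imp_le) simp
qed

lemma has_vector_derivative_at_interior_nonneg:
  assumes "(f has_vector_derivative D) (at s within {0..})" "0 < s"
  shows "(f has_vector_derivative D) (at s)"
proof -
  have "at s within {0..} = at s"
    by (rule at_within_interior) (use assms(2) in simp)
  then show ?thesis using assms(1) by simp
qed

lemma first_hitting_time:
  fixes f :: "real \<Rightarrow> real"
  assumes "continuous_on {0..s1} f" "0 \<le> s1" "b \<le> f s1"
  obtains s0 where "s0 \<in> {0..s1}" "b \<le> f s0" "\<And>s. s \<in> {0..<s0} \<Longrightarrow> f s < b"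
proof -
  define S where "S = {0..s1} \<inter> f -` {b..}"
  have "S \<noteq> {}" "bdd_below S" "closed S"
    using assms unfolding S_def by (auto intro: continuous_closed_preimage)
  then have "Inf S \<in> S" by (rule closed_contains_Inf)
  moreover have "f s < b" if "s \<in> {0..<Inf S}" for s
  proof (rule ccontr)
    assume "\<not> f s < b"
    with that \<open>Inf S \<in> S\<close> have "s \<in> S" unfolding S_def by auto
    then show False using that cInf_lower[OF _ \<open>bdd_below S\<close>] by fastforce
  qed
  ultimately show ?thesis using that unfolding S_def by auto
qed

lemma continuous_dependence_on_initial_value:
  fixes F :: "real \<Rightarrow> 'a::real_inner \<Rightarrow> 'a" and p :: "real \<Rightarrow> 'a"
  assumes lip: "\<And>R. \<exists>L. \<forall>s. L-lipschitz_on (cball 0 R) (F s)"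
    and p: "\<And>s. 0 \<le> s \<Longrightarrow> (p has_vector_derivative F s (p s)) (at s within {0..})"
    and "0 \<le> \<tau>" "0 < m"
  obtains \<epsilon> where "0 < \<epsilon>"
    "\<And>q s. (\<And>s. 0 \<le> s \<Longrightarrow> (q has_vector_derivative F s (q s)) (at s within {0..})) \<Longrightarrow>
       dist (q 0) (p 0) < \<epsilon> \<Longrightarrow> s \<in> {0..\<tau>} \<Longrightarrow> dist (q s) (p s) < m"
proof -
  have cont_p: "continuous_on {0..} p"
    using p by (intro continuous_on_vector_derivative) auto
  have "compact (p ` {0..\<tau>})"
    by (rule compact_continuous_image[OF continuous_on_subset[OF cont_p]]) auto
  then have "bounded (p ` {0..\<tau>})" by (rule compact_imp_bounded)
  then obtain R0 where "\<forall>x\<in>p ` {0..\<tau>}. norm x \<le> R0"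
    unfolding bounded_iff ..
  then have R0: "\<And>s. s \<in> {0..\<tau>} \<Longrightarrow> norm (p s) \<le> R0" by blast
  obtain L where L: "\<And>s. L-lipschitz_on (cball 0 (R0 + m)) (F s)"
    using lip by blast
  then have "0 \<le> L" using lipschitz_on_nonneg by blast
  define \<epsilon> where "\<epsilon> = m / exp (L * \<tau>)"
  have eps: "\<epsilon> > 0" unfolding \<epsilon>_def using \<open>0 < m\<close> by simp
  have "dist (q s) (p s) < m"
    if q: "\<And>s. 0 \<le> s \<Longrightarrow> (q has_vector_derivative F s (q s)) (at s within {0..})"
      and q0: "dist (q 0) (p 0) < \<epsilon>" and s: "s \<in> {0..\<tau>}" for q s
  proof (rule ccontr)
    assume "\<not> dist (q s) (p s) < m"
    have cont_q: "continuous_on {0..} q"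
      using q by (intro continuous_on_vector_derivative) auto
    have "continuous_on {0..s} (\<lambda>s. dist (q s) (p s))"
      using cont_p cont_q by (intro continuous_intros) (auto elim: continuous_on_subset)
    then obtain s0 where s0: "s0 \<in> {0..s}" "m \<le> dist (q s0) (p s0)"
      and before: "\<And>r. r \<in> {0..<s0} \<Longrightarrow> dist (q r) (p r) < m"
      by (rule first_hitting_time[where b = m]) (use s \<open>\<not> dist (q s) (p s) < m\<close> in auto)
    have "norm (q s0 - p s0) \<le> exp (L * s0) * norm (q 0 - p 0)"
    proof (rule norm_diff_le_exp_lipschitz[OF \<open>0 \<le> L\<close>])
      fix r assume r: "r \<in> {0<..<s0}"
      then have "norm (p r) \<le> R0" "dist (q r) (p r) < m" using R0 before s0 s by auto
      then have "q r \<in> cball 0 (R0 + m)" "p r \<in> cball 0 (R0 + m)"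
        using \<open>0 < m\<close> norm_triangle_sub[of "q r" "p r"] by (auto simp: dist_norm)
      then show "norm (F r (q r) - F r (p r)) \<le> L * norm (q r - p r)"
        using lipschitz_onD[OF L] by (simp add: dist_norm)
    qed (use s0 cont_p cont_q q p in
        \<open>auto intro: has_vector_derivative_at_interior_nonneg elim: continuous_on_subset\<close>)
    also have "\<dots> \<le> exp (L * \<tau>) * norm (q 0 - p 0)"
      using s0 s \<open>0 \<le> L\<close> by (intro mult_right_mono) (auto intro: mult_left_mono)
    also have "\<dots> < exp (L * \<tau>) * \<epsilon>"
      using q0 by (simp add: dist_norm)
    also have "\<dots> = m" unfolding \<epsilon>_def by simp
    finally show False using s0(2) by (simp add: dist_norm)
  qed
  with eps show ?thesis by (rule that)
qed

text \<open>Leaving through the lower line -c is expressed as leaves_above (\<lambda>t. - g t) c.\<close>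

definition leaves_above :: "(real \<Rightarrow> real) \<Rightarrow> real \<Rightarrow> bool" where
  "leaves_above g c \<longleftrightarrow> (\<exists>t\<ge>0. c \<le> g t \<and> (\<forall>s\<in>{0..t}. - c < g s))"

lemma leaves_above_strictly:
  assumes g': "\<And>t. 0 \<le> t \<Longrightarrow> (g has_real_derivative g' t) (at t within {0..})"
    and egress: "\<And>t. 0 \<le> t \<Longrightarrow> g t = c \<Longrightarrow> 0 < g' t"
    and "leaves_above g c"
  obtains t where "0 \<le> t" "c < g t" "\<forall>s\<in>{0..t}. - c < g s"
proof -
  obtain t where t: "0 \<le> t" "c \<le> g t" "\<forall>s\<in>{0..t}. - c < g s"
    using \<open>leaves_above g c\<close> unfolding leaves_above_def by blast
  show ?thesis
  proof (cases "g t = c")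
    case True
    obtain d where "0 < d" and inc: "\<And>h. 0 < h \<Longrightarrow> h < d \<Longrightarrow> g t < g (t + h)"
      using has_real_derivative_pos_inc_right[OF g'[OF t(1)] egress[OF t(1) True]] t(1) by auto
    have later: "c < g s" if "t < s" "s < t + d" for s
      using inc[of "s - t"] that True by simp
    have "- c < c" using t(3)[rule_format, of t] t(1) True by auto
    have "- c < g s" if "s \<in> {0..t + d/2}" for s
    proof (cases "s \<le> t")
      case False
      with later[of s] that \<open>0 < d\<close> \<open>- c < c\<close> show ?thesis by auto
    qed (use t that in auto)
    then show ?thesis
      using that[of "t + d/2"] t later[of "t + d/2"] \<open>0 < d\<close> by auto
  qed (use that t in auto)
qed

lemma leaves_above_stable:
  assumes g': "\<And>t. 0 \<le> t \<Longrightarrow> (g has_real_derivative g' t) (at t within {0..})"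
    and egress: "\<And>t. 0 \<le> t \<Longrightarrow> g t = c \<Longrightarrow> 0 < g' t"
    and "leaves_above g c"
  obtains \<tau> m where "0 \<le> \<tau>" "0 < m"
    "\<And>h. \<forall>s\<in>{0..\<tau>}. \<bar>h s - g s\<bar> < m \<Longrightarrow> leaves_above h c"
proof -
  obtain t where t: "0 \<le> t" "c < g t" "\<forall>s\<in>{0..t}. - c < g s"
    using leaves_above_strictly[OF assms] by blast
  have "continuous_on {0..} g"
    using g' by (intro DERIV_continuous_on) auto
  then have "continuous_on {0..t} g"
    by (rule continuous_on_subset) auto
  from continuous_attains_inf[OF compact_Icc _ this] t(1)
  obtain smin where smin: "smin \<in> {0..t}" "\<And>s. s \<in> {0..t} \<Longrightarrow> g smin \<le> g s"
    by auto
  define m where "m = min (g smin + c) (g t - c)"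
  have "0 < m" unfolding m_def using t(2) t(3)[rule_format, OF smin(1)] by auto
  have "leaves_above h c" if h: "\<forall>s\<in>{0..t}. \<bar>h s - g s\<bar> < m" for h
    unfolding leaves_above_def
  proof (intro exI[of _ t] conjI ballI)
    have "\<bar>h t - g t\<bar> < m" using h t(1) by simp
    then show "c \<le> h t" unfolding m_def by linarith
    fix s assume s: "s \<in> {0..t}"
    then have "\<bar>h s - g s\<bar> < m" using h by blast
    with smin(2)[OF s] show "- c < h s" unfolding m_def by linarith
  qed (fact t)
  with t(1) \<open>0 < m\<close> show ?thesis by (rule that)
qed

lemma openin_leaves_above:
  fixes H :: "'a::metric_space \<Rightarrow> real \<Rightarrow> real"
  assumes deriv: "\<And>y t. y \<in> I \<Longrightarrow> 0 \<le> t \<Longrightarrow> (H y has_real_derivative H' y t) (at t within {0..})"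
    and egress: "\<And>y t. y \<in> I \<Longrightarrow> 0 \<le> t \<Longrightarrow> H y t = c \<Longrightarrow> 0 < H' y t"
    and dep: "\<And>y \<tau> m. y \<in> I \<Longrightarrow> 0 \<le> \<tau> \<Longrightarrow> 0 < m \<Longrightarrow>
      \<exists>\<epsilon>>0. \<forall>y'\<in>I. dist y' y < \<epsilon> \<longrightarrow> (\<forall>s\<in>{0..\<tau>}. \<bar>H y' s - H y s\<bar> < m)"
  shows "openin (top_of_set I) {y\<in>I. leaves_above (H y) c}"
  unfolding openin_euclidean_subtopology_iff
proof (intro conjI ballI)
  fix y assume "y \<in> {y\<in>I. leaves_above (H y) c}"
  then have y: "y \<in> I" "leaves_above (H y) c" by auto
  obtain \<tau> m where "0 \<le> \<tau>" "0 < m"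
    and stable: "\<And>h. \<forall>s\<in>{0..\<tau>}. \<bar>h s - H y s\<bar> < m \<Longrightarrow> leaves_above h c"
    using leaves_above_stable[OF deriv[OF y(1)] egress[OF y(1)] y(2)] by blast
  then show "\<exists>\<epsilon>>0. \<forall>y'\<in>I. dist y' y < \<epsilon> \<longrightarrow> y' \<in> {y\<in>I. leaves_above (H y) c}"
    using dep[OF y(1) \<open>0 \<le> \<tau>\<close> \<open>0 < m\<close>] by auto
qed auto

lemma not_leaves_above_both:
  assumes "leaves_above g c"
  shows "\<not> leaves_above (\<lambda>t. - g t) c"
proof
  assume "leaves_above (\<lambda>t. - g t) c"
  then obtain t2 where t2: "0 \<le> t2" "g t2 \<le> - c" "\<forall>s\<in>{0..t2}. g s < c"
    unfolding leaves_above_def by auto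
  obtain t1 where t1: "0 \<le> t1" "c \<le> g t1" "\<forall>s\<in>{0..t1}. - c < g s"
    using assms unfolding leaves_above_def by auto
  show False
  proof (cases "t1 \<le> t2")
    case True
    then have "g t1 < c" using t1(1) t2(3) by simp
    with t1(2) show False by simp
  next
    case False
    then have "- c < g t2" using t2(1) t1(3) by simp
    with t2(2) show False by simp
  qed
qed

lemma trapped_or_leaves:
  assumes "continuous_on {0..} g" "0 < c" "\<not> (\<forall>t\<ge>0. \<bar>g t\<bar> < c)"
  shows "leaves_above g c \<or> leaves_above (\<lambda>t. - g t) c"
proof -
  obtain t where t: "0 \<le> t" "c \<le> \<bar>g t\<bar>" using assms(3) by force
  have "continuous_on {0..t} (\<lambda>s. \<bar>g s\<bar>)"
    using assms(1) by (intro continuous_intros) (auto elim: continuous_on_subset)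
  then obtain s0 where s0: "s0 \<in> {0..t}" "c \<le> \<bar>g s0\<bar>"
    and before: "\<And>s. s \<in> {0..<s0} \<Longrightarrow> \<bar>g s\<bar> < c"
    using t by (rule first_hitting_time[where b = c]) blast
  have upto: "\<bar>g s\<bar> < c \<or> s = s0" if "s \<in> {0..s0}" for s
    using before[of s] that by fastforce
  show ?thesis
  proof (cases "0 \<le> g s0")
    case True
    have "- c < g s" if "s \<in> {0..s0}" for s
      using upto[OF that] True \<open>0 < c\<close> by auto
    then have "leaves_above g c"
      unfolding leaves_above_def using s0 True by (intro exI[of _ s0]) auto
    then show ?thesis ..
  next
    case False
    have "- c < - g s" if "s \<in> {0..s0}" for s
      using upto[OF that] False \<open>0 < c\<close> by auto
    then have "leaves_above (\<lambda>t. - g t) c"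
      unfolding leaves_above_def using s0 False by (intro exI[of _ s0]) auto
    then show ?thesis ..
  qed
qed

text \<open>A one-dimensional instance of Wazewski's retract principle.\<close>

theorem exists_trapped_trajectory:
  fixes G G' :: "real \<Rightarrow> real \<Rightarrow> real"
  assumes "0 < c"
    and init: "\<And>y. y \<in> {-c..c} \<Longrightarrow> G y 0 = y"
    and deriv: "\<And>y t. y \<in> {-c..c} \<Longrightarrow> 0 \<le> t \<Longrightarrow> (G y has_real_derivative G' y t) (at t within {0..})"
    and egress_above: "\<And>y t. y \<in> {-c..c} \<Longrightarrow> 0 \<le> t \<Longrightarrow> G y t = c \<Longrightarrow> 0 < G' y t"
    and egress_below: "\<And>y t. y \<in> {-c..c} \<Longrightarrow> 0 \<le> t \<Longrightarrow> G y t = - c \<Longrightarrow> G' y t < 0"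
    and dep: "\<And>y \<tau> m. y \<in> {-c..c} \<Longrightarrow> 0 \<le> \<tau> \<Longrightarrow> 0 < m \<Longrightarrow>
      \<exists>\<epsilon>>0. \<forall>y'\<in>{-c..c}. dist y' y < \<epsilon> \<longrightarrow> (\<forall>s\<in>{0..\<tau>}. \<bar>G y' s - G y s\<bar> < m)"
  shows "\<exists>y\<in>{-c..c}. \<forall>t\<ge>0. \<bar>G y t\<bar> < c"
proof (rule ccontr)
  assume none: "\<not> ?thesis"
  define A where "A = {y\<in>{-c..c}. leaves_above (G y) c}"
  define B where "B = {y\<in>{-c..c}. leaves_above (\<lambda>t. - G y t) c}"
  have openA: "openin (top_of_set {-c..c}) A"
    unfolding A_def by (rule openin_leaves_above[OF deriv egress_above dep])
  have openB: "openin (top_of_set {-c..c}) B"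
    unfolding B_def
  proof (rule openin_leaves_above[where H = "\<lambda>y t. - G y t" and H' = "\<lambda>y t. - G' y t"])
    fix y \<tau> m :: real assume "y \<in> {-c..c}" "0 \<le> \<tau>" "0 < m"
    have flip: "\<bar>- a - - b\<bar> = \<bar>a - b\<bar>" for a b :: real by arith
    show "\<exists>\<epsilon>>0. \<forall>y'\<in>{-c..c}. dist y' y < \<epsilon> \<longrightarrow> (\<forall>s\<in>{0..\<tau>}. \<bar>- G y' s - - G y s\<bar> < m)"
      unfolding flip using dep[OF \<open>y \<in> {-c..c}\<close> \<open>0 \<le> \<tau>\<close> \<open>0 < m\<close>] .
  qed (use deriv egress_below in \<open>auto intro: DERIV_minus\<close>)
  have cover: "{-c..c} \<subseteq> A \<union> B"
  proof
    fix y assume y: "y \<in> {-c..c}"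
    have "continuous_on {0..} (G y)"
      using deriv[OF y] by (intro DERIV_continuous_on) auto
    moreover have "\<not> (\<forall>t\<ge>0. \<bar>G y t\<bar> < c)" using none y by blast
    ultimately have "leaves_above (G y) c \<or> leaves_above (\<lambda>t. - G y t) c"
      by (rule trapped_or_leaves[OF _ \<open>0 < c\<close>])
    then show "y \<in> A \<union> B"
      using y unfolding A_def B_def by blast
  qed
  have disjoint: "A \<inter> B = {}"
    unfolding A_def B_def using not_leaves_above_both by blast
  have "c \<in> A" "- c \<in> B"
    unfolding A_def B_def leaves_above_def using init \<open>0 < c\<close> by (auto intro!: exI[of _ 0])
  then have "A \<noteq> {}" "B \<noteq> {}" by auto
  have "connected {-c..c}" by simp
  moreover have "\<exists>E1 E2. openin (top_of_set {-c..c}) E1 \<and> openin (top_of_set {-c..c}) E2 \<and>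
      {-c..c} \<subseteq> E1 \<union> E2 \<and> E1 \<inter> E2 = {} \<and> E1 \<noteq> {} \<and> E2 \<noteq> {}"
    by (intro exI[of _ A] exI[of _ B] conjI) fact+
  ultimately show False
    unfolding connected_openin by (rule notE)
qed

lemma is_solution_has_vector_derivative:
  assumes "is_solution v w u lam X Y" "0 \<le> t"
  shows "((\<lambda>t. (X t, Y t)) has_vector_derivative (v (X t, Y t), w (X t, Y t) + u (lam * t)))
    (at t within {0..})"
  using assms unfolding is_solution_def has_real_derivative_iff_has_vector_derivative
  by (blast intro: has_vector_derivative_Pair)

lemma C_inf_system_lipschitz:
  fixes v w :: "real \<times> real \<Rightarrow> real"
  assumes "C_inf v" "C_inf w"
  shows "\<exists>L. \<forall>t. L-lipschitz_on (cball 0 R) (\<lambda>z. (v z, w z + u (lam * t)))"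
proof -
  obtain v' where v': "\<forall>z. (v has_derivative v' z) (at z)" "\<forall>h. continuous_on UNIV (\<lambda>z. v' z h)"
    using C_inf_imp_C1[OF assms(1)] by blast
  obtain Lv where v: "Lv-lipschitz_on (cball 0 R) v"
    by (rule C1_lipschitz_on_compact_convex[OF v'[rule_format] compact_cball convex_cball]) assumption
  obtain w' where w': "\<forall>z. (w has_derivative w' z) (at z)" "\<forall>h. continuous_on UNIV (\<lambda>z. w' z h)"
    using C_inf_imp_C1[OF assms(2)] by blast
  obtain Lw where w: "Lw-lipschitz_on (cball 0 R) w"
    by (rule C1_lipschitz_on_compact_convex[OF w'[rule_format] compact_cball convex_cball]) assumption
  have "(sqrt (Lv\<^sup>2 + (Lw + 0)\<^sup>2))-lipschitz_on (cball 0 R) (\<lambda>z. (v z, w z + u (lam * t)))" for t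
    by (intro lipschitz_on_Pair v lipschitz_on_add w lipschitz_on_constant)
  then show ?thesis by blast
qed

lemma solution_continuous_dependence:
  assumes "C_inf v" "C_inf w" "is_solution v w u lam X Y" "0 \<le> \<tau>" "0 < m"
  obtains \<epsilon> where "0 < \<epsilon>"
    "\<And>X' Y' s. is_solution v w u lam X' Y' \<Longrightarrow> dist (X' 0, Y' 0) (X 0, Y 0) < \<epsilon> \<Longrightarrow>
       s \<in> {0..\<tau>} \<Longrightarrow> \<bar>Y' s - Y s\<bar> < m"
proof -
  let ?F = "\<lambda>t z. (v z, w z + u (lam * t))"
  obtain \<epsilon> where "0 < \<epsilon>" and \<epsilon>:
    "\<And>q s. (\<And>s. 0 \<le> s \<Longrightarrow> (q has_vector_derivative ?F s (q s)) (at s within {0..})) \<Longrightarrow>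
       dist (q 0) (X 0, Y 0) < \<epsilon> \<Longrightarrow> s \<in> {0..\<tau>} \<Longrightarrow> dist (q s) (X s, Y s) < m"
    by (rule continuous_dependence_on_initial_value[of ?F "\<lambda>t. (X t, Y t)", OF
        C_inf_system_lipschitz[OF assms(1,2)] is_solution_has_vector_derivative[OF assms(3)] assms(4,5)]) auto
  have "\<bar>Y' s - Y s\<bar> < m"
    if "is_solution v w u lam X' Y'" "dist (X' 0, Y' 0) (X 0, Y 0) < \<epsilon>" "s \<in> {0..\<tau>}" for X' Y' s
    using \<epsilon>[of "\<lambda>t. (X' t, Y' t)", OF is_solution_has_vector_derivative[OF that(1)] that(2,3)]
      dist_snd_le[of "(X' s, Y' s)" "(X s, Y s)"] by (simp add: dist_real_def)
  with \<open>0 < \<epsilon>\<close> show ?thesis by (rule that)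
qed

lemma solution_family_continuous_dependence:
  assumes "C_inf v" "C_inf w"
    and sol: "\<And>y. y \<in> I \<Longrightarrow> is_solution v w u lam (X y) (Y y)"
    and init: "\<And>y. y \<in> I \<Longrightarrow> X y 0 = 0 \<and> Y y 0 = y"
    and "y \<in> I" "0 \<le> \<tau>" "0 < m"
  shows "\<exists>\<epsilon>>0. \<forall>y'\<in>I. dist y' y < \<epsilon> \<longrightarrow> (\<forall>s\<in>{0..\<tau>}. \<bar>Y y' s - Y y s\<bar> < m)"
proof -
  obtain \<epsilon> where "0 < \<epsilon>" and \<epsilon>: "\<And>X' Y' s. is_solution v w u lam X' Y' \<Longrightarrow>
      dist (X' 0, Y' 0) (X y 0, Y y 0) < \<epsilon> \<Longrightarrow> s \<in> {0..\<tau>} \<Longrightarrow> \<bar>Y' s - Y y s\<bar> < m"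
    by (rule solution_continuous_dependence[OF assms(1,2) sol[OF \<open>y \<in> I\<close>] assms(6,7)]) auto
  have "\<bar>Y y' s - Y y s\<bar> < m" if "y' \<in> I" "dist y' y < \<epsilon>" "s \<in> {0..\<tau>}" for y' s
    using \<epsilon>[OF sol[OF that(1)] _ that(3)] init[OF that(1)] init[OF \<open>y \<in> I\<close>] that(2)
    by (simp add: dist_Pair_Pair dist_real_def)
  with \<open>0 < \<epsilon>\<close> show ?thesis by blast
qed

lemma averaged_coordinate_has_derivative:
  assumes sol: "is_solution v w u lam X Y" and "0 < lam"
    and U: "\<And>s. 0 \<le> s \<Longrightarrow> (U has_real_derivative u s) (at s within {0..})" and "0 \<le> t"
  shows "((\<lambda>t. Y t - U (lam * t) / lam) has_real_derivative w (X t, Y t)) (at t within {0..})"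
proof -
  have "(*) lam ` {0..} = {0..}"
  proof
    show "(*) lam ` {0..} \<subseteq> {0..}" using \<open>0 < lam\<close> by auto
    show "{0..} \<subseteq> (*) lam ` {0..}"
    proof
      fix x :: real assume "x \<in> {0..}"
      then show "x \<in> (*) lam ` {0..}"
        using \<open>0 < lam\<close> by (intro image_eqI[of _ _ "x / lam"]) auto
    qed
  qed
  then have "(U has_real_derivative u (lam * t)) (at (lam * t) within (*) lam ` {0..})"
    using U \<open>0 < lam\<close> \<open>0 \<le> t\<close> by simp
  moreover have "((*) lam has_real_derivative lam) (at t within {0..})"
    by (auto intro!: derivative_eq_intros)
  ultimately have "(U \<circ> (*) lam has_real_derivative u (lam * t) * lam) (at t within {0..})"
    by (rule DERIV_image_chain)
  then have "((\<lambda>t. U (lam * t)) has_real_derivative u (lam * t) * lam) (at t within {0..})"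
    by (simp add: comp_def mult.commute)
  from DERIV_diff[OF sol[unfolded is_solution_def, rule_format, OF \<open>0 \<le> t\<close>, THEN conjunct2]
      DERIV_cdivide[OF this, of lam]]
  show ?thesis using \<open>0 < lam\<close> by simp
qed

lemma periodic_bounded_on_nonneg:
  fixes g :: "real \<Rightarrow> 'a::real_normed_vector"
  assumes cont: "continuous_on {0..T} g" and "0 < T"
    and per: "\<And>s. 0 \<le> s \<Longrightarrow> g (s + T) = g s"
  obtains M where "\<And>s. 0 \<le> s \<Longrightarrow> norm (g s) \<le> M"
proof -
  have "bounded (g ` {0..T})"
    by (rule compact_imp_bounded[OF compact_continuous_image[OF cont compact_Icc]])
  then obtain M where M: "\<forall>x\<in>g ` {0..T}. norm x \<le> M"
    unfolding bounded_iff ..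
  have shift: "g (r + real n * T) = g r" if "0 \<le> r" for r n
  proof (induction n)
    case (Suc n)
    have "g (r + real (Suc n) * T) = g ((r + real n * T) + T)"
      by (simp add: algebra_simps)
    also have "\<dots> = g (r + real n * T)"
      using that \<open>0 < T\<close> by (intro per) simp
    finally show ?case using Suc.IH by simp
  qed simp
  have "norm (g s) \<le> M" if "0 \<le> s" for s
  proof -
    define n where "n = nat \<lfloor>s / T\<rfloor>"
    define r where "r = s - real n * T"
    have "0 \<le> \<lfloor>s / T\<rfloor>" using that \<open>0 < T\<close> by simp
    then have "real n = of_int \<lfloor>s / T\<rfloor>" unfolding n_def by simp
    then have "real n \<le> s / T" "s / T < real n + 1"
      using floor_correct[of "s / T"] by linarith+
    then have "r \<in> {0..T}"
      unfolding r_def using \<open>0 < T\<close> by (simp add: field_simps)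
    then have "g s = g r"
      using shift[of r n] unfolding r_def by simp
    with M \<open>r \<in> {0..T}\<close> show ?thesis by simp
  qed
  then show ?thesis by (rule that)
qed

lemma primitive_of_periodic_mean_zero:
  fixes u :: "real \<Rightarrow> real"
  assumes cont: "continuous_on UNIV u" and "0 < T"
    and per: "\<And>t. u (t + T) = u t" and mean: "integral {0..T} u = 0"
  obtains U M where "U 0 = 0"
    "\<And>s. 0 \<le> s \<Longrightarrow> (U has_real_derivative u s) (at s within {0..})"
    "\<And>s. 0 \<le> s \<Longrightarrow> \<bar>U s\<bar> \<le> M"
proof -
  define U where "U s = integral {0..s} u" for s
  have integrable: "u integrable_on {a..b}" for a b
    using cont by (intro integrable_continuous_interval) (auto elim: continuous_on_subset)
  have deriv: "(U has_real_derivative u s) (at s within {0..})" if "0 \<le> s" for s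
  proof -
    have "(U has_real_derivative u s) (at s within {0..s + 1})"
      unfolding U_def using that cont
      by (intro integral_has_real_derivative) (auto elim: continuous_on_subset)
    moreover have "at s within {0..s + 1} = at s within {0..}"
      by (rule at_within_nhd[of _ "{..<s + 1}"]) auto
    ultimately show ?thesis by simp
  qed
  have "continuous_on {0..} U"
    using deriv by (intro DERIV_continuous_on) auto
  then have contU: "continuous_on {0..T} U"
    by (rule continuous_on_subset) auto
  have perU: "U (s + T) = U s" if "0 \<le> s" for s
  proof -
    have "U (s + T) = integral {0..T} u + integral {T..s + T} u"
      using Henstock_Kurzweil_Integration.integral_combine[where a = 0 and c = T and b = "s + T" and f = u]
        that \<open>0 < T\<close> integrable
      unfolding U_def by simp
    also have "integral {T..s + T} u = integral {0..s} (\<lambda>x. u (x + T))"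
      using integral_shift_real_ivl[where f = u and a = T and b = "s + T" and c = T] by simp
    finally show ?thesis
      unfolding U_def mean per by simp
  qed
  obtain M where M: "\<And>s. 0 \<le> s \<Longrightarrow> norm (U s) \<le> M"
    by (rule periodic_bounded_on_nonneg[OF contU \<open>0 < T\<close> perU]) auto
  show ?thesis
    by (rule that[of U M]) (use deriv M in \<open>auto simp: U_def\<close>)
qed

lemma sign_near_horizontal_lines:
  fixes w :: "real \<times> real \<Rightarrow> real"
  assumes w': "\<And>z. (w has_derivative w' z) (at z)"
    and "0 < \<delta>" and B: "\<And>x y. \<bar>y - 1\<bar> < \<delta> \<or> \<bar>y + 1\<bar> < \<delta> \<Longrightarrow> \<bar>deriv (\<lambda>s. w (x, s)) y\<bar> \<le> B"
    and "0 < a" and top: "\<And>x. a < w (x, 1)" and bottom: "\<And>x. w (x, -1) < - a"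
  obtains \<rho> where "0 < \<rho>" "\<rho> \<le> 1"
    "\<And>x y. 1 - \<rho> \<le> y \<Longrightarrow> y \<le> 1 \<Longrightarrow> 0 < w (x, y)"
    "\<And>x y. -1 \<le> y \<Longrightarrow> y \<le> -1 + \<rho> \<Longrightarrow> w (x, y) < 0"
proof -
  define \<rho> where "\<rho> = min 1 (min (\<delta> / 2) (a / (\<bar>B\<bar> + 1)))"
  have "0 < \<rho>" "\<rho> \<le> 1" "\<rho> < \<delta>"
    unfolding \<rho>_def using \<open>0 < \<delta>\<close> \<open>0 < a\<close> by auto
  have "\<rho> * \<bar>B\<bar> \<le> a / (\<bar>B\<bar> + 1) * \<bar>B\<bar>"
    unfolding \<rho>_def by (intro mult_right_mono) auto
  also have "\<dots> < a"
    using \<open>0 < a\<close> by (simp add: field_simps)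
  finally have "\<rho> * \<bar>B\<bar> < a" .
  have near: "\<bar>w (x, y) - w (x, c)\<bar> < a" if "c = 1 \<or> c = -1" "\<bar>y - c\<bar> \<le> \<rho>" for x y c
  proof -
    have "norm (w (x, y) - w (x, c)) \<le> \<bar>B\<bar> * norm (y - c)"
    proof (rule field_differentiable_bound[OF convex_ball, of c \<delta>])
      fix z assume "z \<in> ball c \<delta>"
      then have "\<bar>z - 1\<bar> < \<delta> \<or> \<bar>z + 1\<bar> < \<delta>"
        using that(1) by (auto simp: dist_real_def)
      moreover have "((\<lambda>s. w (x, s)) has_real_derivative w' (x, z) (0, 1)) (at z)"
        by (rule has_real_derivative_partial2[OF w'])
      ultimately have "\<bar>w' (x, z) (0, 1)\<bar> \<le> B"
        using B[of z x] DERIV_imp_deriv by metis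
      then show "norm (w' (x, z) (0, 1)) \<le> \<bar>B\<bar>" by simp
      show "((\<lambda>s. w (x, s)) has_field_derivative w' (x, z) (0, 1)) (at z within ball c \<delta>)"
        by (rule has_field_derivative_at_within[OF has_real_derivative_partial2[OF w']])
    qed (use that \<open>\<rho> < \<delta>\<close> in \<open>auto simp: dist_real_def\<close>)
    also have "\<dots> \<le> \<bar>B\<bar> * \<rho>"
      using that(2) by (intro mult_left_mono) auto
    finally show ?thesis using \<open>\<rho> * \<bar>B\<bar> < a\<close> by (simp add: mult.commute)
  qed
  show ?thesis
  proof (rule that[OF \<open>0 < \<rho>\<close> \<open>\<rho> \<le> 1\<close>])
    fix x y assume "1 - \<rho> \<le> y" "y \<le> 1"
    then show "0 < w (x, y)" using near[of 1 y x] top[of x] by auto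
  next
    fix x y assume "-1 \<le> y" "y \<le> -1 + \<rho>"
    then show "w (x, y) < 0" using near[of "-1" y x] bottom[of x] by auto
  qed
qed

lemma trapped_solution_exists:
  fixes v w :: "real \<times> real \<Rightarrow> real"
  assumes smooth: "C_inf v" "C_inf w"
    and sol: "\<And>y. \<bar>y\<bar> \<le> 1 \<Longrightarrow> is_solution v w u lam (X y) (Y y)"
    and init: "\<And>y. \<bar>y\<bar> \<le> 1 \<Longrightarrow> X y 0 = 0 \<and> Y y 0 = y"
    and U: "U 0 = 0" "\<And>s. 0 \<le> s \<Longrightarrow> (U has_real_derivative u s) (at s within {0..})"
      "\<And>s. 0 \<le> s \<Longrightarrow> \<bar>U s\<bar> \<le> M"
    and \<rho>: "0 < \<rho>" "\<rho> \<le> 1"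
      "\<And>x y. 1 - \<rho> \<le> y \<Longrightarrow> y \<le> 1 \<Longrightarrow> 0 < w (x, y)"
      "\<And>x y. -1 \<le> y \<Longrightarrow> y \<le> -1 + \<rho> \<Longrightarrow> w (x, y) < 0"
    and lam: "0 < lam" "2 * M \<le> lam * \<rho>"
  shows "\<exists>y. \<bar>y\<bar> \<le> 1 \<and> (\<forall>t\<ge>0. \<bar>Y y t\<bar> < 1)"
proof -
  define \<eta> where "\<eta> = M / lam"
  have "0 \<le> M" using U(1) U(3)[of 0] by simp
  then have "0 \<le> \<eta>" "2 * \<eta> \<le> \<rho>"
    unfolding \<eta>_def using lam by (auto simp: field_simps)
  define c where "c = 1 - \<eta>"
  have "0 < c" unfolding c_def using \<open>2 * \<eta> \<le> \<rho>\<close> \<rho>(2) by linarith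
  have c1: "\<bar>y\<bar> \<le> 1" if "y \<in> {-c..c}" for y
    using that \<open>0 \<le> \<eta>\<close> unfolding c_def by auto
  define G where "G y t = Y y t - U (lam * t) / lam" for y t
  have "\<bar>U (lam * t) / lam\<bar> \<le> \<eta>" if "0 \<le> t" for t
    unfolding \<eta>_def using U(3)[of "lam * t"] that lam(1) by (simp add: divide_right_mono)
  then have Y_near_G: "\<bar>Y y t - G y t\<bar> \<le> \<eta>" if "0 \<le> t" for t y
    using that unfolding G_def by simp
  have "\<exists>y\<in>{-c..c}. \<forall>t\<ge>0. \<bar>G y t\<bar> < c"
  proof (rule exists_trapped_trajectory[OF \<open>0 < c\<close>, where G' = "\<lambda>y t. w (X y t, Y y t)"])
    fix y assume "y \<in> {-c..c}"
    then show "G y 0 = y" unfolding G_def using init[OF c1] U(1) by simp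
  next
    fix y t :: real assume y: "y \<in> {-c..c}" and "0 \<le> t"
    show "(G y has_real_derivative w (X y t, Y y t)) (at t within {0..})"
      unfolding G_def[abs_def]
      by (rule averaged_coordinate_has_derivative[OF sol[OF c1[OF y]] lam(1) U(2) \<open>0 \<le> t\<close>])
  next
    fix y t :: real assume "0 \<le> t" "G y t = c"
    with Y_near_G[of t y] \<open>2 * \<eta> \<le> \<rho>\<close> have "1 - \<rho> \<le> Y y t" "Y y t \<le> 1"
      unfolding c_def by linarith+
    then show "0 < w (X y t, Y y t)" by (rule \<rho>(3))
  next
    fix y t :: real assume "0 \<le> t" "G y t = - c"
    with Y_near_G[of t y] \<open>2 * \<eta> \<le> \<rho>\<close> have "-1 \<le> Y y t" "Y y t \<le> -1 + \<rho>"
      unfolding c_def by linarith+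
    then show "w (X y t, Y y t) < 0" by (rule \<rho>(4))
  next
    fix y \<tau> m :: real assume "y \<in> {-c..c}" "0 \<le> \<tau>" "0 < m"
    then show "\<exists>\<epsilon>>0. \<forall>y'\<in>{-c..c}. dist y' y < \<epsilon> \<longrightarrow> (\<forall>s\<in>{0..\<tau>}. \<bar>G y' s - G y s\<bar> < m)"
      using solution_family_continuous_dependence[where I = "{-c..c}", OF smooth sol[OF c1] init[OF c1]]
      by (simp add: G_def)
  qed
  then obtain y where "y \<in> {-c..c}" and trapped: "\<And>t. 0 \<le> t \<Longrightarrow> \<bar>G y t\<bar> < c"
    by blast
  moreover have "\<bar>Y y t\<bar> < 1" if "0 \<le> t" for t
    using trapped[OF that] Y_near_G[of t y, OF that] unfolding c_def by linarith
  ultimately show ?thesis using c1 by blast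
qed

theorem theorem2p3:
  fixes v w :: "real \<times> real \<Rightarrow> real" and u :: "real \<Rightarrow> real"
  assumes smooth: "C_inf v" "C_inf w" "C_inf u"
    and bdd: "\<exists>\<delta>>0. \<exists>B. \<forall>x y. (\<bar>y - 1\<bar> < \<delta> \<or> \<bar>y + 1\<bar> < \<delta>) \<longrightarrow>
                 \<bar>v (x, y)\<bar> \<le> B \<and> \<bar>w (x, y)\<bar> \<le> B \<and>
                 \<bar>deriv (\<lambda>s. v (s, y)) x\<bar> \<le> B \<and> \<bar>deriv (\<lambda>s. v (x, s)) y\<bar> \<le> B \<and>
                 \<bar>deriv (\<lambda>s. w (s, y)) x\<bar> \<le> B \<and> \<bar>deriv (\<lambda>s. w (x, s)) y\<bar> \<le> B"
    and bnd: "\<exists>a>0. \<forall>x. w (x, 1) > a \<and> w (x, -1) < - a"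
    and per: "\<exists>T>0. (\<forall>t. u (t + T) = u t) \<and> (1 / T) * integral {0..T} u = 0"
    and global: "\<forall>lam x0 y0. \<bar>y0\<bar> \<le> 1 \<longrightarrow>
                   (\<exists>X Y. is_solution v w u lam X Y \<and> X 0 = x0 \<and> Y 0 = y0)"
  shows "\<exists>lam0>0. \<forall>lam\<ge>lam0. \<exists>X Y. is_solution v w u lam X Y \<and> (\<forall>t\<ge>0. \<bar>Y t\<bar> < 1)"
proof -
  obtain w' where w': "\<forall>z. (w has_derivative w' z) (at z)"
    using C_inf_imp_C1[OF smooth(2)] by blast
  obtain \<delta> B where "0 < \<delta>"
    and B: "\<And>x y. \<bar>y - 1\<bar> < \<delta> \<or> \<bar>y + 1\<bar> < \<delta> \<Longrightarrow> \<bar>deriv (\<lambda>s. w (x, s)) y\<bar> \<le> B"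
    using bdd by blast
  obtain a where "0 < a" and top: "\<And>x. a < w (x, 1)" and bottom: "\<And>x. w (x, -1) < - a"
    using bnd by blast
  obtain \<rho> where \<rho>: "0 < \<rho>" "\<rho> \<le> 1"
    "\<And>x y. 1 - \<rho> \<le> y \<Longrightarrow> y \<le> 1 \<Longrightarrow> 0 < w (x, y)"
    "\<And>x y. -1 \<le> y \<Longrightarrow> y \<le> -1 + \<rho> \<Longrightarrow> w (x, y) < 0"
    using sign_near_horizontal_lines[OF w'[rule_format] \<open>0 < \<delta>\<close> B \<open>0 < a\<close> top bottom] by blast
  obtain T where "0 < T" "\<And>t. u (t + T) = u t" "integral {0..T} u = 0"
    using per by auto
  then obtain U M where U: "U 0 = 0" "\<And>s. 0 \<le> s \<Longrightarrow> (U has_real_derivative u s) (at s within {0..})"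
    "\<And>s. 0 \<le> s \<Longrightarrow> \<bar>U s\<bar> \<le> M"
    by (rule primitive_of_periodic_mean_zero[OF C_inf_imp_continuous[OF smooth(3)]]) auto
  show ?thesis
  proof (intro exI[of _ "max 1 (2 * M / \<rho>)"] conjI allI impI)
    fix lam assume "max 1 (2 * M / \<rho>) \<le> lam"
    then have lam: "0 < lam" "2 * M \<le> lam * \<rho>"
      using \<rho>(1) by (auto simp: field_simps)
    \<comment> \<open>Uniqueness is not assumed: any choice of solutions works, since continuous
      dependence on the initial value comes from the Gronwall estimate.\<close>
    obtain X Y where sol: "\<And>y. \<bar>y\<bar> \<le> 1 \<Longrightarrow> is_solution v w u lam (X y) (Y y)"
      and init: "\<And>y. \<bar>y\<bar> \<le> 1 \<Longrightarrow> X y 0 = 0 \<and> Y y 0 = y"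
      using global by metis
    obtain y where "\<bar>y\<bar> \<le> 1" "\<forall>t\<ge>0. \<bar>Y y t\<bar> < 1"
      using trapped_solution_exists[OF smooth(1,2) sol init U \<rho> lam] by blast
    with sol show "\<exists>X Y. is_solution v w u lam X Y \<and> (\<forall>t\<ge>0. \<bar>Y t\<bar> < 1)" by blast
  qed simp
qed

end
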